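(* Under the hypotheses and notation of the context (PQRS-form with $m\ge1$ and $S$ invertible self-adjoint), the scattering matrix admits, for all sufficiently large $k>0$, the convergent expansion $$\mathcal S(k)=-I^{(n)}+2M_Q\left(I^{(a)}+RR^*+QQ^*\right)^{-1}M_Q^*+2X(X^*X)^{-1}X^*+2X\sum_{j=1}^\infty\left(\tfrac{1}{\mathrm ik}\right)^j\left[(X^*X)^{-1}S\right]^j(X^*X)^{-1}X^*,$$ and $$\lim_{k\to\infty}\mathcal S(k)=I^{(n)}-2M_P\left[I^{(b)}+P^*P+(RP-Q)^*(RP-Q)\right]^{-1}M_P^*.$$
   Context: $I^{(j)}$ denotes the $j\times j$ identity matrix. Let $0\le r_A,r_B\le n$ with $m=r_A+r_B-n\ge1$, $a=n-r_A$, $b=n-r_B$, $S\in\mathbb C^{m\times m}$ invertible self-adjoint, $P\in\mathbb C^{m\times b}$, $Q\in\mathbb C^{a\times b}$, $R\in\mathbb C^{a\times m}$. The vertex coupling is given by the PQRS-form $B_{PQRS}\Psi'=A_{PQRS}\Psi$ with (block sizes $m,a,b$) $$B_{PQRS}=\begin{pmatrix} I^{(m)} & 0 & P\\ R & I^{(a)} & Q\\ 0&0&0\end{pmatrix},\qquad A_{PQRS}=\begin{pmatrix} S & -SR^* & 0\\ 0&0&0\\ -P^* & (RP-Q)^* & I^{(b)}\end{pmatrix};$$ its scattering matrix is $\mathcal S(k)=-(A+\mathrm ikB)^{-1}(A-\mathrm ikB)$, $k>0$, with $A=-A_{PQRS}$, $B=B_{PQRS}$. Further, $$M_P=\begin{pmatrix}-P\\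 RP-Q\\ I^{(b)}\end{pmatrix},\quad M_Q=\begin{pmatrix}R^*\\ I^{(a)}\\ Q^*\end{pmatrix},\quad X=\begin{pmatrix}I^{(m)}\\0\\P^*\end{pmatrix}-M_Q\left(I^{(a)}+RR^*+QQ^*\right)^{-1}(R+QP^* ).$$ *)

theory Defs
  imports "HOL-Analysis.Analysis" "Jordan_Normal_Form.Schur_Decomposition"
begin

text \<open>Inverse of a square matrix (meaningful when the matrix is invertible).\<close>
definition minv :: "complex mat \<Rightarrow> complex mat" where
  "minv A = (SOME B. B \<in> carrier_mat (dim_row A) (dim_row A) \<and>
                     A * B = 1\<^sub>m (dim_row A) \<and> B * A = 1\<^sub>m (dim_row A))"

definition hcat :: "'a::zero mat \<Rightarrow> 'a mat \<Rightarrow> 'a mat" where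
  "hcat A B = four_block_mat A B (0\<^sub>m 0 (dim_col A)) (0\<^sub>m 0 (dim_col B))"

definition vcat :: "'a::zero mat \<Rightarrow> 'a mat \<Rightarrow> 'a mat" where
  "vcat A B = four_block_mat A (0\<^sub>m (dim_row A) 0) B (0\<^sub>m (dim_row B) 0)"

definition block3 ::
  "'a::zero mat \<Rightarrow> 'a mat \<Rightarrow> 'a mat \<Rightarrow> 'a mat \<Rightarrow> 'a mat \<Rightarrow> 'a mat \<Rightarrow>
   'a mat \<Rightarrow> 'a mat \<Rightarrow> 'a mat \<Rightarrow> 'a mat" where
  "block3 A11 A12 A13 A21 A22 A23 A31 A32 A33 =
     vcat (hcat (hcat A11 A12) A13) (vcat (hcat (hcat A21 A22) A23) (hcat (hcat A31 A32) A33))"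

definition col3 :: "'a::zero mat \<Rightarrow> 'a mat \<Rightarrow> 'a mat \<Rightarrow> 'a mat" where
  "col3 A1 A2 A3 = vcat A1 (vcat A2 A3)"

definition B_PQRS :: "nat \<Rightarrow> nat \<Rightarrow> nat \<Rightarrow> complex mat \<Rightarrow> complex mat \<Rightarrow> complex mat \<Rightarrow> complex mat" where
  "B_PQRS m a b P Q R =
     block3 (1\<^sub>m m) (0\<^sub>m m a) P
            R (1\<^sub>m a) Q
            (0\<^sub>m b m) (0\<^sub>m b a) (0\<^sub>m b b)"

definition A_PQRS :: "nat \<Rightarrow> nat \<Rightarrow> nat \<Rightarrow> complex mat \<Rightarrow> complex mat \<Rightarrow> complex mat \<Rightarrow> complex mat \<Rightarrow> complex mat" where
  "A_PQRS m a b P Q R S =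
     block3 S (- (S * mat_adjoint R)) (0\<^sub>m m b)
            (0\<^sub>m a m) (0\<^sub>m a a) (0\<^sub>m a b)
            (- mat_adjoint P) (mat_adjoint (R * P - Q)) (1\<^sub>m b)"

definition scat :: "nat \<Rightarrow> nat \<Rightarrow> nat \<Rightarrow> complex mat \<Rightarrow> complex mat \<Rightarrow> complex mat \<Rightarrow> complex mat \<Rightarrow> real \<Rightarrow> complex mat" where
  "scat m a b P Q R S k =
     (let A = - A_PQRS m a b P Q R S; B = B_PQRS m a b P Q R
      in - (minv (A + (\<i> * complex_of_real k) \<cdot>\<^sub>m B) * (A - (\<i> * complex_of_real k) \<cdot>\<^sub>m B)))"

definition M_P :: "nat \<Rightarrow> complex mat \<Rightarrow> complex mat \<Rightarrow> complex mat \<Rightarrow> complex mat" where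
  "M_P b P Q R = col3 (- P) (R * P - Q) (1\<^sub>m b)"

definition M_Q :: "nat \<Rightarrow> complex mat \<Rightarrow> complex mat \<Rightarrow> complex mat \<Rightarrow> complex mat" where
  "M_Q a P Q R = col3 (mat_adjoint R) (1\<^sub>m a) (mat_adjoint Q)"

definition X_mat :: "nat \<Rightarrow> nat \<Rightarrow> nat \<Rightarrow> complex mat \<Rightarrow> complex mat \<Rightarrow> complex mat \<Rightarrow> complex mat" where
  "X_mat m a b P Q R =
     col3 (1\<^sub>m m) (0\<^sub>m a m) (mat_adjoint P)
     - M_Q a P Q R * minv (1\<^sub>m a + R * mat_adjoint R + Q * mat_adjoint Q) * (R + Q * mat_adjoint P)"

end

theory Submission
  imports Defs
begin

text \<open>With \<open>A = - A_PQRS\<close> and \<open>B = B_PQRS\<close>, the matrix \<open>A + \<i> k B\<close> maps the columns of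
  \<open>M\<^sub>Q\<close>, \<open>X\<close> and \<open>M\<^sub>P\<close> to explicit combinations of the three block embeddings. Solving for
  the embeddings shows that it is invertible and that the scattering matrix is
  \<open>2 (M\<^sub>Q (M\<^sub>Q\<^sup>* M\<^sub>Q)\<^sup>-\<^sup>1 M\<^sub>Q\<^sup>* + X H(k)\<^sup>-\<^sup>1 X\<^sup>*) - I\<close> with
  \<open>H(k) = X\<^sup>* X - (\<i> k)\<^sup>-\<^sup>1 S\<close>, which is invertible because \<open>X\<close> is injective and \<open>S\<close> is
  Hermitian. The orthogonal projections onto the ranges of \<open>M\<^sub>Q\<close>, \<open>X\<close> and \<open>M\<^sub>P\<close> add up
  to the identity, which identifies the constant term of the expansion with the claimed limit.
  Finally \<open>H(k)\<^sup>-\<^sup>1 X\<^sup>* X = (I - K)\<^sup>-\<^sup>1\<close> with \<open>K = (\<i> k)\<^sup>-\<^sup>1 (X\<^sup>* X)\<^sup>-\<^sup>1 S\<close>, so the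
  Neumann series of \<open>K\<close> gives the expansion as soon as \<open>\<parallel>K\<parallel> < 1\<close>, and its remainder is
  \<open>O(1/k)\<close>.\<close>

section \<open>Matrix algebra with dimension side conditions\<close>

lemma conjugate_dist_diff: "conjugate (x - y) = conjugate x - conjugate (y :: 'a :: conjugatable_ring)"
  by (metis conjugate_dist_add conjugate_neg diff_conv_add_uminus)

lemma conjugate_one[simp]: "conjugate (1 :: 'a :: conjugatable_field) = 1"
proof -
  have "conjugate 1 * conjugate 1 = conjugate (1 :: 'a)"
    by (metis conjugate_dist_mul mult_1)
  moreover have "conjugate (1 :: 'a) \<noteq> 0" by simp
  ultimately show ?thesis by (metis mult_cancel_right1)
qed

lemma dim_mat_adjoint[simp]:
  "dim_row (mat_adjoint A) = dim_col A" "dim_col (mat_adjoint A) = dim_row A"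
  by (auto simp: mat_adjoint_def mat_of_rows_def)

lemma mat_adjoint_carrier[simp]: "A \<in> carrier_mat p q \<Longrightarrow> mat_adjoint A \<in> carrier_mat q p"
  by auto

lemma index_mat_adjoint[simp]:
  "i < dim_col A \<Longrightarrow> j < dim_row A \<Longrightarrow> mat_adjoint A $$ (i, j) = conjugate (A $$ (j, i))"
  by (auto simp: mat_adjoint_def mat_of_rows_def)

lemma mat_adjoint_mat_adjoint[simp]: "mat_adjoint (mat_adjoint A) = A"
  by (rule eq_matI) auto

lemma mat_adjoint_mult:
  fixes A B :: "'a :: conjugatable_field mat"
  assumes "dim_col A = dim_row B"
  shows "mat_adjoint (A * B) = mat_adjoint B * mat_adjoint A"
  by (rule eq_matI) (use assms in \<open>auto simp: scalar_prod_def sum_conjugate conjugate_dist_mul mult.commute\<close>)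

lemma mat_adjoint_add[simp]:
  fixes A B :: "'a :: conjugatable_field mat"
  shows "dim_row A = dim_row B \<Longrightarrow> dim_col A = dim_col B \<Longrightarrow>
    mat_adjoint (A + B) = mat_adjoint A + mat_adjoint B"
  by (rule eq_matI) (auto simp: conjugate_dist_add)

lemma mat_adjoint_uminus[simp]:
  fixes A :: "'a :: conjugatable_field mat"
  shows "mat_adjoint (- A) = - mat_adjoint A"
  by (rule eq_matI) (auto simp: conjugate_neg)

lemma mat_adjoint_minus[simp]:
  fixes A B :: "'a :: conjugatable_field mat"
  shows "dim_row A = dim_row B \<Longrightarrow> dim_col A = dim_col B \<Longrightarrow>
    mat_adjoint (A - B) = mat_adjoint A - mat_adjoint B"
  by (rule eq_matI) (auto simp: conjugate_dist_diff)

lemma mat_adjoint_one[simp]: "mat_adjoint (1\<^sub>m n :: 'a :: conjugatable_field mat) = 1\<^sub>m n"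
  by (rule eq_matI) auto

lemma mat_adjoint_zero[simp]: "mat_adjoint (0\<^sub>m r c :: 'a :: conjugatable_field mat) = 0\<^sub>m c r"
  by (rule eq_matI) auto

lemma assoc_mult_mat':
  fixes A :: "'a :: semiring_0 mat"
  shows "dim_col A = dim_row B \<Longrightarrow> dim_col B = dim_row C \<Longrightarrow> A * B * C = A * (B * C)"
  by (rule assoc_mult_mat[of A "dim_row A" "dim_col A" B "dim_col B" C "dim_col C"]) auto

lemma mult_add_distrib_mat':
  fixes A :: "'a :: semiring_0 mat"
  shows "dim_col A = dim_row B \<Longrightarrow> dim_row B = dim_row C \<Longrightarrow> dim_col B = dim_col C \<Longrightarrow>
    A * (B + C) = A * B + A * C"
  by (rule mult_add_distrib_mat[of A "dim_row A" "dim_col A" B "dim_col B"]) auto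

lemma add_mult_distrib_mat':
  fixes A :: "'a :: semiring_0 mat"
  shows "dim_row A = dim_row B \<Longrightarrow> dim_col A = dim_col B \<Longrightarrow> dim_col A = dim_row C \<Longrightarrow>
    (A + B) * C = A * C + B * C"
  by (rule add_mult_distrib_mat[of A "dim_row A" "dim_col A" B C "dim_col C"]) auto

lemma mult_minus_distrib_mat':
  fixes A :: "'a :: ring mat"
  shows "dim_col A = dim_row B \<Longrightarrow> dim_row B = dim_row C \<Longrightarrow> dim_col B = dim_col C \<Longrightarrow>
    A * (B - C) = A * B - A * C"
  by (rule mult_minus_distrib_mat[of A "dim_row A" "dim_col A" B "dim_col B"]) auto

lemma minus_mult_distrib_mat':
  fixes A :: "'a :: ring mat"
  shows "dim_row A = dim_row B \<Longrightarrow> dim_col A = dim_col B \<Longrightarrow> dim_col A = dim_row C \<Longrightarrow>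
    (A - B) * C = A * C - B * C"
  by (rule minus_mult_distrib_mat[of A "dim_row A" "dim_col A" B C "dim_col C"]) auto

lemma mult_smult_assoc_mat':
  fixes A :: "'a :: comm_semiring_0 mat"
  shows "dim_col A = dim_row B \<Longrightarrow> (c \<cdot>\<^sub>m A) * B = c \<cdot>\<^sub>m (A * B)"
  by (rule eq_matI) auto

lemma mult_smult_distrib':
  fixes A :: "'a :: comm_semiring_0 mat"
  shows "dim_col A = dim_row B \<Longrightarrow> A * (c \<cdot>\<^sub>m B) = c \<cdot>\<^sub>m (A * B)"
  by (rule eq_matI) auto

lemma smult_smult_mat: "c \<cdot>\<^sub>m (d \<cdot>\<^sub>m A) = (c * d :: 'a :: semigroup_mult) \<cdot>\<^sub>m A"
  by (rule eq_matI) (auto simp: mult.assoc)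

lemma one_smult_mat[simp]: "(1 :: 'a :: monoid_mult) \<cdot>\<^sub>m A = A"
  by (rule eq_matI) auto

lemma add_zero_mat'[simp]:
  fixes A :: "'a :: monoid_add mat"
  shows "dim_row A = r \<Longrightarrow> dim_col A = c \<Longrightarrow> A + 0\<^sub>m r c = A"
    and "dim_row A = r \<Longrightarrow> dim_col A = c \<Longrightarrow> 0\<^sub>m r c + A = A"
  by (rule eq_matI; auto)+

lemma minus_zero_mat'[simp]:
  fixes A :: "'a :: group_add mat"
  shows "dim_row A = r \<Longrightarrow> dim_col A = c \<Longrightarrow> A - 0\<^sub>m r c = A"
    and "dim_row A = r \<Longrightarrow> dim_col A = c \<Longrightarrow> 0\<^sub>m r c - A = - A"
  by (rule eq_matI; auto)+

lemma uminus_zero_mat[simp]: "- 0\<^sub>m r c = (0\<^sub>m r c :: 'a :: group_add mat)"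
  by (rule eq_matI) auto

lemma minus_cancel_mat'[simp]:
  fixes A B :: "'a :: group_add mat"
  shows "A - A = 0\<^sub>m (dim_row A) (dim_col A)"
    and "dim_row A = dim_row B \<Longrightarrow> dim_col A = dim_col B \<Longrightarrow> A - B + B = A"
    and "dim_row A = dim_row B \<Longrightarrow> dim_col A = dim_col B \<Longrightarrow> A + B - B = A"
  by (rule eq_matI; auto)+

lemma smult_pow_mat:
  fixes A :: "'a :: comm_semiring_1 mat"
  assumes "A \<in> carrier_mat n n"
  shows "(c \<cdot>\<^sub>m A) ^\<^sub>m j = c ^ j \<cdot>\<^sub>m A ^\<^sub>m j"
proof (induction j)
  case (Suc j)
  have "(c \<cdot>\<^sub>m A) ^\<^sub>m Suc j = (c ^ j \<cdot>\<^sub>m A ^\<^sub>m j) * (c \<cdot>\<^sub>m A)"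
    using Suc by simp
  also have "\<dots> = (c * c ^ j) \<cdot>\<^sub>m (A ^\<^sub>m j * A)"
    using assms by (simp add: mult_smult_assoc_mat' mult_smult_distrib' smult_smult_mat)
  also have "\<dots> = c ^ Suc j \<cdot>\<^sub>m A ^\<^sub>m Suc j"
    by (simp only: power_Suc pow_mat.simps)
  finally show ?case .
qed (use assms in auto)

lemma pow_mat_commute:
  fixes A :: "'a :: semiring_1 mat"
  assumes "A \<in> carrier_mat n n"
  shows "A * A ^\<^sub>m j = A ^\<^sub>m j * A"
proof (induction j)
  case (Suc j)
  have "A * (A ^\<^sub>m j * A) = (A * A ^\<^sub>m j) * A"
    by (rule assoc_mult_mat'[symmetric]) (use assms in auto)
  with Suc show ?case by simp
qed (use assms in auto)

section \<open>Block columns and block rows\<close>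

definition row3 :: "'a :: zero mat \<Rightarrow> 'a mat \<Rightarrow> 'a mat \<Rightarrow> 'a mat" where
  "row3 A B C = hcat (hcat A B) C"

lemma dim_vcat[simp]: "dim_row (vcat A B) = dim_row A + dim_row B" "dim_col (vcat A B) = dim_col A"
  by (auto simp: vcat_def)

lemma dim_hcat[simp]: "dim_row (hcat A B) = dim_row A" "dim_col (hcat A B) = dim_col A + dim_col B"
  by (auto simp: hcat_def)

lemma dim_col3[simp]:
  "dim_row (col3 A B C) = dim_row A + dim_row B + dim_row C" "dim_col (col3 A B C) = dim_col A"
  by (auto simp: col3_def)

lemma dim_row3[simp]:
  "dim_row (row3 A B C) = dim_row A" "dim_col (row3 A B C) = dim_col A + dim_col B + dim_col C"
  by (auto simp: row3_def)

lemma index_vcat: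
  "i < dim_row A + dim_row B \<Longrightarrow> j < dim_col A \<Longrightarrow>
    vcat A B $$ (i, j) = (if i < dim_row A then A $$ (i, j) else B $$ (i - dim_row A, j))"
  by (auto simp: vcat_def)

lemma index_hcat:
  "i < dim_row A \<Longrightarrow> j < dim_col A + dim_col B \<Longrightarrow>
    hcat A B $$ (i, j) = (if j < dim_col A then A $$ (i, j) else B $$ (i, j - dim_col A))"
  by (auto simp: hcat_def)

lemma block3_eq_col3_row3:
  "block3 A11 A12 A13 A21 A22 A23 A31 A32 A33 =
    col3 (row3 A11 A12 A13) (row3 A21 A22 A23) (row3 A31 A32 A33)"
  by (simp add: block3_def col3_def row3_def)

lemma vcat_assoc:
  "dim_col A = dim_col B \<Longrightarrow> dim_col B = dim_col C \<Longrightarrow> vcat A (vcat B C) = vcat (vcat A B) C"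
  by (rule eq_matI) (auto simp: index_vcat)

lemma mult_vcat:
  fixes A B :: "'a :: semiring_0 mat"
  assumes "dim_col A = dim_col B"
  shows "vcat A B * C = vcat (A * C) (B * C)"
proof (rule eq_matI)
  fix i j assume i: "i < dim_row (vcat (A * C) (B * C))" and j: "j < dim_col (vcat (A * C) (B * C))"
  have "row (vcat A B) i = (if i < dim_row A then row A i else row B (i - dim_row A))"
    using i assms by (intro eq_vecI) (auto simp: index_vcat)
  then show "(vcat A B * C) $$ (i, j) = vcat (A * C) (B * C) $$ (i, j)"
    using i j by (simp add: index_vcat)
qed simp_all

lemma hcat_mult_vcat:
  fixes A B C D :: "'a :: semiring_0 mat"
  assumes "dim_row A = dim_row B" "dim_col C = dim_col D"
    and "dim_col A = dim_row C" "dim_col B = dim_row D"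
  shows "hcat A B * vcat C D = A * C + B * D"
proof (rule eq_matI)
  fix i j assume i: "i < dim_row (A * C + B * D)" and j: "j < dim_col (A * C + B * D)"
  have row: "row (hcat A B) i = row A i @\<^sub>v row B i"
    using i assms by (intro eq_vecI) (auto simp: index_hcat)
  have col: "col (vcat C D) j = col C j @\<^sub>v col D j"
    using j assms by (intro eq_vecI) (auto simp: index_vcat)
  have "row (hcat A B) i \<bullet> col (vcat C D) j = row A i \<bullet> col C j + row B i \<bullet> col D j"
    unfolding row col using assms
    by (intro scalar_prod_append[of _ "dim_col A" _ "dim_col B"]) (auto intro: carrier_vecI)
  then show "(hcat A B * vcat C D) $$ (i, j) = (A * C + B * D) $$ (i, j)"
    using i j assms by simp
qed (use assms in simp_all)

lemma mat_adjoint_vcat: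
  fixes A B :: "'a :: conjugatable_field mat"
  shows "dim_col A = dim_col B \<Longrightarrow> mat_adjoint (vcat A B) = hcat (mat_adjoint A) (mat_adjoint B)"
  by (rule eq_matI) (auto simp: index_vcat index_hcat)

lemma mult_col3:
  fixes A B C :: "'a :: semiring_0 mat"
  shows "dim_col A = dim_col B \<Longrightarrow> dim_col B = dim_col C \<Longrightarrow>
    col3 A B C * M = col3 (A * M) (B * M) (C * M)"
  by (simp add: col3_def mult_vcat)

lemma row3_mult_col3:
  fixes A B C :: "'a :: semiring_0 mat"
  assumes "dim_row A = dim_row B" "dim_row B = dim_row C"
    and "dim_col X = dim_col Y" "dim_col Y = dim_col Z"
    and "dim_col A = dim_row X" "dim_col B = dim_row Y" "dim_col C = dim_row Z"
  shows "row3 A B C * col3 X Y Z = A * X + B * Y + C * Z"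
  using assms unfolding row3_def col3_def
  by (subst vcat_assoc) (simp_all add: hcat_mult_vcat)

lemma mat_adjoint_col3:
  fixes A B C :: "'a :: conjugatable_field mat"
  shows "dim_col A = dim_col B \<Longrightarrow> dim_col B = dim_col C \<Longrightarrow>
    mat_adjoint (col3 A B C) = row3 (mat_adjoint A) (mat_adjoint B) (mat_adjoint C)"
  unfolding row3_def col3_def by (subst vcat_assoc) (simp_all add: mat_adjoint_vcat)

lemma add_col3:
  fixes A B C :: "'a :: monoid_add mat"
  assumes "dim_row A = dim_row A'" "dim_row B = dim_row B'" "dim_row C = dim_row C'"
    and "dim_col A = dim_col B" "dim_col B = dim_col C" "dim_col A' = dim_col B'"
    and "dim_col B' = dim_col C'" "dim_col A = dim_col A'"
  shows "col3 A B C + col3 A' B' C' = col3 (A + A') (B + B') (C + C')"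
  using assms unfolding col3_def by (intro eq_matI) (auto simp: index_vcat)

lemma minus_col3:
  fixes A B C :: "'a :: group_add mat"
  assumes "dim_row A = dim_row A'" "dim_row B = dim_row B'" "dim_row C = dim_row C'"
    and "dim_col A = dim_col B" "dim_col B = dim_col C" "dim_col A' = dim_col B'"
    and "dim_col B' = dim_col C'" "dim_col A = dim_col A'"
  shows "col3 A B C - col3 A' B' C' = col3 (A - A') (B - B') (C - C')"
  using assms unfolding col3_def by (intro eq_matI) (auto simp: index_vcat)

lemma col3_zero[simp]: "col3 (0\<^sub>m r1 c) (0\<^sub>m r2 c) (0\<^sub>m r3 c) = 0\<^sub>m (r1 + r2 + r3) c"
  unfolding col3_def by (rule eq_matI) (auto simp: index_vcat)

lemma row3_zero[simp]: "row3 (0\<^sub>m r c1) (0\<^sub>m r c2) (0\<^sub>m r c3) = 0\<^sub>m r (c1 + c2 + c3)"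
  unfolding row3_def by (rule eq_matI) (auto simp: index_hcat)

definition embed1 :: "nat \<Rightarrow> nat \<Rightarrow> nat \<Rightarrow> 'a :: {zero, one} mat" where
  "embed1 m a b = col3 (1\<^sub>m m) (0\<^sub>m a m) (0\<^sub>m b m)"

definition embed2 :: "nat \<Rightarrow> nat \<Rightarrow> nat \<Rightarrow> 'a :: {zero, one} mat" where
  "embed2 m a b = col3 (0\<^sub>m m a) (1\<^sub>m a) (0\<^sub>m b a)"

definition embed3 :: "nat \<Rightarrow> nat \<Rightarrow> nat \<Rightarrow> 'a :: {zero, one} mat" where
  "embed3 m a b = col3 (0\<^sub>m m b) (0\<^sub>m a b) (1\<^sub>m b)"

lemma dim_embed[simp]:
  "dim_row (embed1 m a b) = m + a + b" "dim_col (embed1 m a b) = m"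
  "dim_row (embed2 m a b) = m + a + b" "dim_col (embed2 m a b) = a"
  "dim_row (embed3 m a b) = m + a + b" "dim_col (embed3 m a b) = b"
  by (auto simp: embed1_def embed2_def embed3_def)

lemma mat_adjoint_embed:
  "mat_adjoint (embed1 m a b) = (row3 (1\<^sub>m m) (0\<^sub>m m a) (0\<^sub>m m b) :: 'a :: conjugatable_field mat)"
  "mat_adjoint (embed2 m a b) = (row3 (0\<^sub>m a m) (1\<^sub>m a) (0\<^sub>m a b) :: 'a mat)"
  "mat_adjoint (embed3 m a b) = (row3 (0\<^sub>m b m) (0\<^sub>m b a) (1\<^sub>m b) :: 'a mat)"
  by (simp_all add: embed1_def embed2_def embed3_def mat_adjoint_col3)

lemma col3_eq_embed_sum:
  fixes A1 A2 A3 :: "'a :: semiring_1 mat"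
  assumes "dim_row A1 = m" "dim_row A2 = a" "dim_row A3 = b"
    and "dim_col A1 = q" "dim_col A2 = q" "dim_col A3 = q"
  shows "col3 A1 A2 A3 = embed1 m a b * A1 + embed2 m a b * A2 + embed3 m a b * A3"
  using assms by (simp add: embed1_def embed2_def embed3_def mult_col3 add_col3)

lemma embed_sum_identity:
  "embed1 m a b * mat_adjoint (embed1 m a b) + embed2 m a b * mat_adjoint (embed2 m a b)
    + embed3 m a b * mat_adjoint (embed3 m a b) = (1\<^sub>m (m + a + b) :: 'a :: conjugatable_field mat)"
proof -
  have "embed1 m a b * mat_adjoint (embed1 m a b) + embed2 m a b * mat_adjoint (embed2 m a b)
      + embed3 m a b * mat_adjoint (embed3 m a b)
    = col3 (mat_adjoint (embed1 m a b)) (mat_adjoint (embed2 m a b)) (mat_adjoint (embed3 m a b) :: 'a mat)"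
    by (rule col3_eq_embed_sum[symmetric]) simp_all
  also have "\<dots> = 1\<^sub>m (m + a + b)"
    unfolding mat_adjoint_embed
    by (rule eq_matI) (auto simp: col3_def row3_def index_vcat index_hcat)
  finally show ?thesis .
qed

section \<open>Inverses and Hermitian forms\<close>

lemma minv_eqI:
  assumes A: "A \<in> carrier_mat n n" and B: "B \<in> carrier_mat n n" and AB: "A * B = 1\<^sub>m n"
  shows "minv A = B"
proof -
  have BA: "B * A = 1\<^sub>m n" by (rule mat_mult_left_right_inverse[OF A B AB])
  have "\<exists>B. B \<in> carrier_mat n n \<and> A * B = 1\<^sub>m n \<and> B * A = 1\<^sub>m n"
    using B AB BA by blast
  then have inv: "minv A \<in> carrier_mat n n" "minv A * A = 1\<^sub>m n"
    unfolding minv_def using A by (metis (mono_tags, lifting) carrier_matD(1) someI_ex)+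
  have "minv A = minv A * (A * B)" using AB inv by simp
  also have "\<dots> = (minv A * A) * B" by (rule assoc_mult_mat[symmetric, OF inv(1) A B])
  also have "\<dots> = B" using inv B by simp
  finally show ?thesis .
qed

lemma minv_inverse:
  assumes "A \<in> carrier_mat n n" "B \<in> carrier_mat n n" "A * B = 1\<^sub>m n"
  shows "minv A \<in> carrier_mat n n" "A * minv A = 1\<^sub>m n" "minv A * A = 1\<^sub>m n"
  using minv_eqI[OF assms] mat_mult_left_right_inverse[OF assms] assms by auto

lemma minv_inverse_if_injective:
  assumes A: "A \<in> carrier_mat n n"
    and inj: "\<And>v. v \<in> carrier_vec n \<Longrightarrow> A *\<^sub>v v = 0\<^sub>v n \<Longrightarrow> v = 0\<^sub>v n"
  shows "minv A \<in> carrier_mat n n" "A * minv A = 1\<^sub>m n" "minv A * A = 1\<^sub>m n"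
proof -
  have "det A \<noteq> 0"
    using inj det_0_iff_vec_prod_zero_field[OF A] by blast
  from det_non_zero_imp_unit[OF A this, of undefined]
  obtain B where "B \<in> carrier_mat n n" "A * B = 1\<^sub>m n"
    unfolding Units_def by (auto simp: ring_mat_simps)
  then show "minv A \<in> carrier_mat n n" "A * minv A = 1\<^sub>m n" "minv A * A = 1\<^sub>m n"
    using minv_inverse[OF A] by auto
qed

lemma mat_adjoint_minv:
  assumes A: "A \<in> carrier_mat n n" and herm: "mat_adjoint A = A"
    and inv: "minv A \<in> carrier_mat n n" "minv A * A = 1\<^sub>m n"
  shows "mat_adjoint (minv A) = minv A"
proof -
  have "mat_adjoint (minv A * A) = mat_adjoint A * mat_adjoint (minv A)"
    using A inv by (intro mat_adjoint_mult) auto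
  then have "A * mat_adjoint (minv A) = 1\<^sub>m n"
    using inv herm by simp
  then show ?thesis
    using minv_eqI[OF A] inv by (metis carrier_matD carrier_matI dim_mat_adjoint)
qed

lemma mult_mat_vec_zero[simp]: "A \<in> carrier_mat p q \<Longrightarrow> A *\<^sub>v 0\<^sub>v q = 0\<^sub>v p"
  by (rule eq_vecI) auto

lemma injective_if_left_inverse:
  fixes L M :: "'a :: semiring_1 mat"
  assumes LM: "L * M = 1\<^sub>m q" and M: "M \<in> carrier_mat p q" and L: "L \<in> carrier_mat q p"
    and v: "v \<in> carrier_vec q" and Mv: "M *\<^sub>v v = 0\<^sub>v p"
  shows "v = 0\<^sub>v q"
proof -
  have "v = (L * M) *\<^sub>v v" using LM v by (simp add: one_mult_mat_vec)
  also have "\<dots> = L *\<^sub>v (M *\<^sub>v v)" using L M v by simp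
  finally show ?thesis using Mv L by simp
qed

lemma cscalar_prod_mult_mat_vec:
  fixes A :: "'a :: conjugatable_field mat"
  assumes "A \<in> carrier_mat p q" "v \<in> carrier_vec p" "w \<in> carrier_vec q"
  shows "v \<bullet>c (A *\<^sub>v w) = (mat_adjoint A *\<^sub>v v) \<bullet>c w"
proof -
  have "v \<bullet>c (A *\<^sub>v w) = (\<Sum>i<p. \<Sum>j<q. v $ i * (conjugate (A $$ (i, j)) * conjugate (w $ j)))"
    using assms by (simp add: scalar_prod_def sum_conjugate conjugate_dist_mul sum_distrib_left
        lessThan_atLeast0)
  also have "\<dots> = (\<Sum>j<q. \<Sum>i<p. conjugate (A $$ (i, j)) * v $ i * conjugate (w $ j))"
    by (subst sum.swap) (simp add: ac_simps)
  also have "\<dots> = (mat_adjoint A *\<^sub>v v) \<bullet>c w"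
    using assms by (simp add: scalar_prod_def sum_distrib_right lessThan_atLeast0)
  finally show ?thesis .
qed

lemma conjugate_minus_vec:
  fixes v w :: "'a :: conjugatable_ring vec"
  shows "v \<in> carrier_vec n \<Longrightarrow> w \<in> carrier_vec n \<Longrightarrow> conjugate (v - w) = conjugate v - conjugate w"
  by (rule eq_vecI) (auto simp: conjugate_dist_diff)

lemma conjugate_cscalar_prod:
  fixes v w :: "'a :: conjugatable_field vec"
  shows "v \<in> carrier_vec n \<Longrightarrow> w \<in> carrier_vec n \<Longrightarrow> conjugate (v \<bullet>c w) = w \<bullet>c v"
  by (metis conjugate_conjugate_sprod conjugate_vec_sprod_comm)

lemma hermitian_form_real:
  fixes S :: "complex mat"
  assumes S: "S \<in> carrier_mat q q" and herm: "mat_adjoint S = S" and v: "v \<in> carrier_vec q"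
  shows "Im (v \<bullet>c (S *\<^sub>v v)) = 0"
proof -
  have "cnj (v \<bullet>c (S *\<^sub>v v)) = (S *\<^sub>v v) \<bullet>c v"
    using conjugate_cscalar_prod[OF v, of "S *\<^sub>v v"] S v by simp
  also have "\<dots> = v \<bullet>c (S *\<^sub>v v)"
    using cscalar_prod_mult_mat_vec[OF S v v] herm by simp
  finally show ?thesis by (metis cnj.sel(2) neg_equal_zero)
qed

lemma cscalar_prod_gram_minus_smult:
  fixes X S :: "complex mat"
  assumes X: "X \<in> carrier_mat p q" and S: "S \<in> carrier_mat q q" and v: "v \<in> carrier_vec q"
  shows "v \<bullet>c ((mat_adjoint X * X - t \<cdot>\<^sub>m S) *\<^sub>v v)
    = (X *\<^sub>v v) \<bullet>c (X *\<^sub>v v) - cnj t * (v \<bullet>c (S *\<^sub>v v))"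
proof -
  define u where "u = X *\<^sub>v v"
  have u: "u \<in> carrier_vec p" using X v by (simp add: u_def)
  have a1: "mat_adjoint X *\<^sub>v u \<in> carrier_vec q" and a2: "t \<cdot>\<^sub>v (S *\<^sub>v v) \<in> carrier_vec q"
    using X S v unfolding carrier_vec_def by simp_all
  have "(t \<cdot>\<^sub>m S) *\<^sub>v v = t \<cdot>\<^sub>v (S *\<^sub>v v)"
    using S v by (intro eq_vecI) (auto simp: scalar_prod_def sum_distrib_left ac_simps)
  moreover have "(mat_adjoint X * X) *\<^sub>v v = mat_adjoint X *\<^sub>v u"
    unfolding u_def by (rule assoc_mult_mat_vec[OF mat_adjoint_carrier[OF X] X v])
  moreover have "mat_adjoint X * X \<in> carrier_mat q q" using X by auto
  ultimately have "(mat_adjoint X * X - t \<cdot>\<^sub>m S) *\<^sub>v v = mat_adjoint X *\<^sub>v u - t \<cdot>\<^sub>v (S *\<^sub>v v)"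
    using minus_mult_distrib_mat_vec[of "mat_adjoint X * X" q q "t \<cdot>\<^sub>m S" v] S v by simp
  then have "v \<bullet>c ((mat_adjoint X * X - t \<cdot>\<^sub>m S) *\<^sub>v v) = v \<bullet>c (mat_adjoint X *\<^sub>v u - t \<cdot>\<^sub>v (S *\<^sub>v v))"
    by simp
  also have "\<dots> = v \<bullet>c (mat_adjoint X *\<^sub>v u) - v \<bullet>c (t \<cdot>\<^sub>v (S *\<^sub>v v))"
    unfolding conjugate_minus_vec[OF a1 a2]
    by (rule scalar_prod_minus_distrib[OF v carrier_vec_conjugate[OF a1] carrier_vec_conjugate[OF a2]])
  also have "v \<bullet>c (mat_adjoint X *\<^sub>v u) = u \<bullet>c u"
    using cscalar_prod_mult_mat_vec[of "mat_adjoint X" q p v u] X u v by (simp add: u_def)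
  also have "v \<bullet>c (t \<cdot>\<^sub>v (S *\<^sub>v v)) = cnj t * (v \<bullet>c (S *\<^sub>v v))"
    using v S by (simp add: conjugate_smult_vec)
  finally show ?thesis by (simp add: u_def)
qed

text \<open>Pairing with \<open>v\<close> turns \<open>(X\<^sup>* X - t S) v = 0\<close> into \<open>|X v|\<^sup>2 = conj t \<langle>v, S v\<rangle>\<close>,
  a nonnegative real number that is purely imaginary when \<open>t\<close> is.\<close>

lemma gram_minus_hermitian_injective:
  fixes X S :: "complex mat"
  assumes X: "X \<in> carrier_mat p q" and S: "S \<in> carrier_mat q q" and herm: "mat_adjoint S = S"
    and t: "Re t = 0"
    and inj: "\<And>w. w \<in> carrier_vec q \<Longrightarrow> X *\<^sub>v w = 0\<^sub>v p \<Longrightarrow> w = 0\<^sub>v q"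
    and v: "v \<in> carrier_vec q" and ker: "(mat_adjoint X * X - t \<cdot>\<^sub>m S) *\<^sub>v v = 0\<^sub>v q"
  shows "v = 0\<^sub>v q"
proof -
  define u where "u = X *\<^sub>v v"
  have u: "u \<in> carrier_vec p" using X v by (simp add: u_def)
  have "u \<bullet>c u = cnj t * (v \<bullet>c (S *\<^sub>v v))"
    using cscalar_prod_gram_minus_smult[OF X S v, of t] ker v by (simp add: u_def)
  then have "Re (u \<bullet>c u) = 0"
    using t hermitian_form_real[OF S herm v] by simp
  moreover have "Im (u \<bullet>c u) = 0"
    using conjugate_square_ge_0_vec[of u] by (simp add: less_eq_complex_def)
  ultimately have "u \<bullet>c u = 0" by (simp add: complex_eq_iff)
  then have "u = 0\<^sub>v p" using u by simp
  then show ?thesis using inj v by (simp add: u_def)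
qed

lemma minv_gram_minus_hermitian:
  fixes X S :: "complex mat"
  assumes X: "X \<in> carrier_mat p q" and S: "S \<in> carrier_mat q q" and herm: "mat_adjoint S = S"
    and t: "Re t = 0" and L: "L \<in> carrier_mat q p" "L * X = 1\<^sub>m q"
  defines "H \<equiv> mat_adjoint X * X - t \<cdot>\<^sub>m S"
  shows "minv H \<in> carrier_mat q q" "H * minv H = 1\<^sub>m q" "minv H * H = 1\<^sub>m q"
proof -
  have H: "H \<in> carrier_mat q q" using X S by (auto simp: H_def)
  have "v = 0\<^sub>v q" if "v \<in> carrier_vec q" "H *\<^sub>v v = 0\<^sub>v q" for v
    using gram_minus_hermitian_injective[OF X S herm t injective_if_left_inverse[OF L(2) X L(1)]]
      that unfolding H_def by blast
  then show "minv H \<in> carrier_mat q q" "H * minv H = 1\<^sub>m q" "minv H * H = 1\<^sub>m q"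
    using minv_inverse_if_injective[OF H] by blast+
qed

lemma minv_gram:
  fixes X :: "complex mat"
  assumes "X \<in> carrier_mat p q" "L \<in> carrier_mat q p" "L * X = 1\<^sub>m q"
  shows "minv (mat_adjoint X * X) \<in> carrier_mat q q"
    "mat_adjoint X * X * minv (mat_adjoint X * X) = 1\<^sub>m q"
    "minv (mat_adjoint X * X) * (mat_adjoint X * X) = 1\<^sub>m q"
proof -
  have "mat_adjoint X * X - 0 \<cdot>\<^sub>m 1\<^sub>m q = mat_adjoint X * X"
    using assms by (intro eq_matI) auto
  then show "minv (mat_adjoint X * X) \<in> carrier_mat q q"
    "mat_adjoint X * X * minv (mat_adjoint X * X) = 1\<^sub>m q"
    "minv (mat_adjoint X * X) * (mat_adjoint X * X) = 1\<^sub>m q"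
    using minv_gram_minus_hermitian[OF assms(1) one_carrier_mat _ _ assms(2,3), of 0] by auto
qed

section \<open>Entrywise 1-norm and Neumann series\<close>

definition l1_norm_mat :: "'a :: real_normed_div_algebra mat \<Rightarrow> real" where
  "l1_norm_mat A = (\<Sum>i<dim_row A. \<Sum>j<dim_col A. norm (A $$ (i, j)))"

lemma l1_norm_mat_nonneg: "l1_norm_mat A \<ge> 0"
  unfolding l1_norm_mat_def by (intro sum_nonneg) auto

lemma row_norm_le_l1_norm_mat:
  "i < dim_row A \<Longrightarrow> (\<Sum>j<dim_col A. norm (A $$ (i, j))) \<le> l1_norm_mat A"
  unfolding l1_norm_mat_def by (rule member_le_sum) (auto intro: sum_nonneg)

lemma norm_index_le_l1_norm_mat:
  assumes "i < dim_row A" "j < dim_col A"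
  shows "norm (A $$ (i, j)) \<le> l1_norm_mat A"
  using member_le_sum[of j "{..<dim_col A}" "\<lambda>j. norm (A $$ (i, j))"] row_norm_le_l1_norm_mat[of i A]
    assms by auto

lemma l1_norm_mat_mult_le:
  assumes "dim_col A = dim_row B"
  shows "l1_norm_mat (A * B) \<le> l1_norm_mat A * l1_norm_mat B"
proof -
  have "l1_norm_mat (A * B)
      = (\<Sum>i<dim_row A. \<Sum>j<dim_col B. norm (\<Sum>k<dim_row B. A $$ (i, k) * B $$ (k, j)))"
    unfolding l1_norm_mat_def using assms
    by (intro sum.cong refl) (auto simp: scalar_prod_def atLeast0LessThan)
  also have "\<dots> \<le> (\<Sum>i<dim_row A. \<Sum>j<dim_col B. \<Sum>k<dim_row B. norm (A $$ (i, k)) * norm (B $$ (k, j)))"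
    by (intro sum_mono order_trans[OF norm_sum]) (simp add: norm_mult)
  also have "\<dots> = (\<Sum>i<dim_row A. \<Sum>k<dim_row B. norm (A $$ (i, k)) * (\<Sum>j<dim_col B. norm (B $$ (k, j))))"
    by (simp add: sum_distrib_left sum.swap[of _ "{..<dim_col B}"])
  also have "\<dots> \<le> (\<Sum>i<dim_row A. \<Sum>k<dim_row B. norm (A $$ (i, k)) * l1_norm_mat B)"
    by (intro sum_mono mult_left_mono row_norm_le_l1_norm_mat) auto
  also have "\<dots> = l1_norm_mat A * l1_norm_mat B"
    unfolding l1_norm_mat_def using assms by (simp add: sum_distrib_right)
  finally show ?thesis .
qed

lemma l1_norm_mat_add_le:
  assumes "dim_row A = dim_row B" "dim_col A = dim_col B"
  shows "l1_norm_mat (A + B) \<le> l1_norm_mat A + l1_norm_mat B"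
proof -
  have "l1_norm_mat (A + B) = (\<Sum>i<dim_row A. \<Sum>j<dim_col A. norm (A $$ (i, j) + B $$ (i, j)))"
    unfolding l1_norm_mat_def using assms by (intro sum.cong refl) auto
  also have "\<dots> \<le> (\<Sum>i<dim_row A. \<Sum>j<dim_col A. norm (A $$ (i, j)) + norm (B $$ (i, j)))"
    by (intro sum_mono norm_triangle_ineq)
  also have "\<dots> = l1_norm_mat A + l1_norm_mat B"
    unfolding l1_norm_mat_def using assms by (simp add: sum.distrib)
  finally show ?thesis .
qed

lemma l1_norm_mat_smult: "l1_norm_mat (c \<cdot>\<^sub>m A) = norm c * l1_norm_mat A"
  unfolding l1_norm_mat_def by (simp add: norm_mult sum_distrib_left)

lemma l1_norm_mat_one: "l1_norm_mat (1\<^sub>m n :: 'a :: real_normed_div_algebra mat) = n"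
proof -
  have "l1_norm_mat (1\<^sub>m n :: 'a mat) = (\<Sum>i<n. \<Sum>j<n. if i = j then 1 else 0)"
    unfolding l1_norm_mat_def by (intro sum.cong refl) auto
  then show ?thesis by simp
qed

lemma l1_norm_mat_pow_le:
  assumes "A \<in> carrier_mat n n"
  shows "l1_norm_mat (A ^\<^sub>m Suc j) \<le> l1_norm_mat A ^ Suc j"
proof (induction j)
  case (Suc j)
  have "l1_norm_mat (A ^\<^sub>m Suc (Suc j)) \<le> l1_norm_mat (A ^\<^sub>m Suc j) * l1_norm_mat A"
    using assms by (simp add: l1_norm_mat_mult_le)
  also have "\<dots> \<le> l1_norm_mat A ^ Suc j * l1_norm_mat A"
    by (rule mult_right_mono[OF Suc l1_norm_mat_nonneg])
  finally show ?case by (simp add: mult.commute)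
qed (use assms in simp)

lemma norm_index_mult3_le:
  assumes "dim_col A = dim_row B" "dim_col B = dim_row C" "i < dim_row A" "l < dim_col C"
  shows "norm ((A * B * C) $$ (i, l)) \<le> l1_norm_mat A * l1_norm_mat B * l1_norm_mat C"
proof -
  have "norm ((A * B * C) $$ (i, l)) \<le> l1_norm_mat (A * B * C)"
    using assms by (intro norm_index_le_l1_norm_mat) auto
  also have "\<dots> \<le> l1_norm_mat (A * B) * l1_norm_mat C"
    using assms by (intro l1_norm_mat_mult_le) auto
  also have "\<dots> \<le> l1_norm_mat A * l1_norm_mat B * l1_norm_mat C"
    using assms by (intro mult_right_mono l1_norm_mat_mult_le l1_norm_mat_nonneg)
  finally show ?thesis .
qed

primrec neumann_partial :: "'a :: semiring_1 mat \<Rightarrow> nat \<Rightarrow> 'a mat" where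
  "neumann_partial K 0 = 0\<^sub>m (dim_row K) (dim_col K)"
| "neumann_partial K (Suc J) = neumann_partial K J + K ^\<^sub>m Suc J"

lemma neumann_partial_carrier: "K \<in> carrier_mat n n \<Longrightarrow> neumann_partial K J \<in> carrier_mat n n"
  by (induction J) auto

lemma neumann_remainder:
  fixes K N :: "'a :: comm_ring_1 mat"
  assumes K: "K \<in> carrier_mat n n" and N: "N \<in> carrier_mat n n" and NK: "N - 1\<^sub>m n = N * K"
  shows "N - 1\<^sub>m n - neumann_partial K J = N * K ^\<^sub>m Suc J"
proof (induction J)
  case 0
  show ?case using K N NK by simp
next
  case (Suc J)
  have "N - 1\<^sub>m n - neumann_partial K (Suc J) = (N - 1\<^sub>m n - neumann_partial K J) - K ^\<^sub>m Suc J"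
    using K N neumann_partial_carrier[OF K, of J] by (intro eq_matI) auto
  also have "\<dots> = (N - 1\<^sub>m n) * K ^\<^sub>m Suc J"
    using K N by (simp add: Suc minus_mult_distrib_mat')
  also have "\<dots> = N * (K * K ^\<^sub>m Suc J)"
    using K N by (simp add: NK assoc_mult_mat')
  also have "K * K ^\<^sub>m Suc J = K ^\<^sub>m Suc (Suc J)"
    using pow_mat_commute[OF K, of "Suc J"] by (simp only: pow_mat.simps(2))
  finally show ?case .
qed

lemma index_neumann_partial:
  fixes K :: "'a :: semiring_1 mat"
  assumes "K \<in> carrier_mat n n" "L \<in> carrier_mat p n" "M \<in> carrier_mat n q" "i < p" "l < q"
  shows "(\<Sum>j<J. (L * K ^\<^sub>m Suc j * M) $$ (i, l)) = (L * neumann_partial K J * M) $$ (i, l)"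
proof (induction J)
  case (Suc J)
  have "L * neumann_partial K (Suc J) * M = L * neumann_partial K J * M + L * K ^\<^sub>m Suc J * M"
    using assms neumann_partial_carrier[OF assms(1), of J]
    by (simp add: mult_add_distrib_mat' add_mult_distrib_mat')
  then show ?case using Suc assms by simp
qed (use assms in simp)

lemma neumann_partial_error:
  fixes K N :: "'a :: real_normed_field mat"
  assumes K: "K \<in> carrier_mat n n" and N: "N \<in> carrier_mat n n" and NK: "N - 1\<^sub>m n = N * K"
    and L: "L \<in> carrier_mat p n" and M: "M \<in> carrier_mat n q" and il: "i < p" "l < q"
  shows "norm ((\<Sum>j<J. (L * K ^\<^sub>m Suc j * M) $$ (i, l)) - (L * (N - 1\<^sub>m n) * M) $$ (i, l))
    \<le> l1_norm_mat L * l1_norm_mat N * l1_norm_mat M * l1_norm_mat K ^ Suc J"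
proof -
  have NJ: "neumann_partial K J \<in> carrier_mat n n" by (rule neumann_partial_carrier[OF K])
  have "L * (N - 1\<^sub>m n) * M - L * neumann_partial K J * M = L * (N - 1\<^sub>m n - neumann_partial K J) * M"
    using L M N NJ by (simp add: mult_minus_distrib_mat' minus_mult_distrib_mat')
  also have "\<dots> = L * (N * K ^\<^sub>m Suc J) * M"
    by (simp add: neumann_remainder[OF K N NK])
  finally have "(L * (N - 1\<^sub>m n) * M) $$ (i, l) - (\<Sum>j<J. (L * K ^\<^sub>m Suc j * M) $$ (i, l))
      = (L * (N * K ^\<^sub>m Suc J) * M) $$ (i, l)"
    using index_neumann_partial[OF K L M il] L M il
    by (metis carrier_matD index_minus_mat(1) index_mult_mat(2,3))
  moreover have "l1_norm_mat (N * K ^\<^sub>m Suc J) \<le> l1_norm_mat N * l1_norm_mat K ^ Suc J"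
    using N K l1_norm_mat_pow_le[OF K]
    by (intro order_trans[OF l1_norm_mat_mult_le] mult_left_mono l1_norm_mat_nonneg) auto
  then have "norm ((L * (N * K ^\<^sub>m Suc J) * M) $$ (i, l))
      \<le> l1_norm_mat L * (l1_norm_mat N * l1_norm_mat K ^ Suc J) * l1_norm_mat M"
    using L M N K il
    by (intro order_trans[OF norm_index_mult3_le] mult_right_mono mult_left_mono l1_norm_mat_nonneg)
      auto
  ultimately show ?thesis by (simp add: norm_minus_commute algebra_simps)
qed

lemma neumann_sums:
  fixes K N :: "'a :: real_normed_field mat"
  assumes K: "K \<in> carrier_mat n n" and N: "N \<in> carrier_mat n n" and NK: "N - 1\<^sub>m n = N * K"
    and small: "l1_norm_mat K < 1"
    and L: "L \<in> carrier_mat p n" and M: "M \<in> carrier_mat n q" and il: "i < p" "l < q"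
  shows "(\<lambda>j. (L * K ^\<^sub>m Suc j * M) $$ (i, l)) sums (L * (N - 1\<^sub>m n) * M) $$ (i, l)"
proof -
  let ?c = "l1_norm_mat L * l1_norm_mat N * l1_norm_mat M"
  have "(\<lambda>J. ?c * l1_norm_mat K ^ Suc J) \<longlonglongrightarrow> 0"
    using small l1_norm_mat_nonneg[of K]
    by (intro tendsto_mult_right_zero LIMSEQ_Suc LIMSEQ_power_zero) auto
  then have "(\<lambda>J. (\<Sum>j<J. (L * K ^\<^sub>m Suc j * M) $$ (i, l)) - (L * (N - 1\<^sub>m n) * M) $$ (i, l))
      \<longlonglongrightarrow> 0"
    by (rule Lim_null_comparison[rotated])
      (intro always_eventually allI neumann_partial_error[OF K N NK L M il])
  then show ?thesis unfolding sums_def by (rule LIM_zero_cancel)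
qed

lemma l1_norm_mat_le_if_neumann:
  fixes K N :: "'a :: real_normed_field mat"
  assumes K: "K \<in> carrier_mat n n" and N: "N \<in> carrier_mat n n" and NK: "N - 1\<^sub>m n = N * K"
    and small: "l1_norm_mat K \<le> 1 / 2"
  shows "l1_norm_mat N \<le> 2 * n"
proof -
  have "N = 1\<^sub>m n + N * K" using N NK[symmetric] by (intro eq_matI) auto
  then have "l1_norm_mat N \<le> l1_norm_mat (1\<^sub>m n :: 'a mat) + l1_norm_mat (N * K)"
    using K N by (metis carrier_matD index_mult_mat(2,3) index_one_mat(2,3) l1_norm_mat_add_le)
  also have "\<dots> \<le> n + l1_norm_mat N * (1 / 2)"
    using K N small
    by (intro add_mono order_trans[OF l1_norm_mat_mult_le] mult_left_mono l1_norm_mat_nonneg)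
      (auto simp: l1_norm_mat_one)
  finally show ?thesis by simp
qed

lemma tendsto_at_top_if_norm_le_inverse:
  fixes f :: "real \<Rightarrow> 'a :: real_normed_vector"
  assumes "\<And>x. x > x0 \<Longrightarrow> norm (f x - l) \<le> B / x"
  shows "(f \<longlongrightarrow> l) at_top"
proof -
  have "((\<lambda>x. B / x) \<longlongrightarrow> 0) at_top"
    by (intro tendsto_divide_0[OF tendsto_const] filterlim_at_top_imp_at_infinity filterlim_ident)
  then have "((\<lambda>x. f x - l) \<longlongrightarrow> 0) at_top"
    by (rule Lim_null_comparison[rotated]) (use assms in \<open>auto intro: eventually_at_top_dense[THEN iffD2]\<close>)
  then show ?thesis by (rule LIM_zero_cancel)
qed

section \<open>The PQRS coupling\<close>

locale pqrs_coupling =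
  fixes m a b :: nat and P Q R S :: "complex mat"
  assumes S_carrier: "S \<in> carrier_mat m m" and S_hermitian: "mat_adjoint S = S"
    and P_carrier: "P \<in> carrier_mat m b" and Q_carrier: "Q \<in> carrier_mat a b"
    and R_carrier: "R \<in> carrier_mat a m"
begin

abbreviation "e1 \<equiv> embed1 m a b :: complex mat"
abbreviation "e2 \<equiv> embed2 m a b :: complex mat"
abbreviation "e3 \<equiv> embed3 m a b :: complex mat"

definition "Ac = A_PQRS m a b P Q R S"
definition "Bc = B_PQRS m a b P Q R"
definition "MQ = M_Q a P Q R"
definition "MP = M_P b P Q R"
definition "X = X_mat m a b P Q R"
definition "T = R * P - Q"
definition "V = R + Q * mat_adjoint P"
definition "U = P + mat_adjoint R * T"
definition "E = col3 (1\<^sub>m m) (0\<^sub>m a m) (mat_adjoint P)"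
definition "GQ = 1\<^sub>m a + R * mat_adjoint R + Q * mat_adjoint Q"
definition "GP = 1\<^sub>m b + mat_adjoint P * P + mat_adjoint T * T"
definition "GX = mat_adjoint X * X"
definition "WQ = minv GQ"
definition "WP = minv GP"
definition "WX = minv GX"

lemma dim_PQRS[simp]:
  "dim_row P = m" "dim_col P = b" "dim_row Q = a" "dim_col Q = b"
  "dim_row R = a" "dim_col R = m" "dim_row S = m" "dim_col S = m"
  using P_carrier Q_carrier R_carrier S_carrier by auto

lemma dim_aux[simp]:
  "dim_row T = a" "dim_col T = b" "dim_row V = a" "dim_col V = m"
  "dim_row U = m" "dim_col U = b" "dim_row E = m + a + b" "dim_col E = m"
  "dim_row GQ = a" "dim_col GQ = a" "dim_row GP = b" "dim_col GP = b"
  "dim_row MQ = m + a + b" "dim_col MQ = a" "dim_row MP = m + a + b" "dim_col MP = b"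
  by (auto simp: T_def V_def U_def E_def GQ_def GP_def MQ_def M_Q_def MP_def M_P_def)

lemma MQ_col3: "MQ = col3 (mat_adjoint R) (1\<^sub>m a) (mat_adjoint Q)"
  by (simp add: MQ_def M_Q_def)

lemma MP_col3: "MP = col3 (- P) T (1\<^sub>m b)"
  by (simp add: MP_def M_P_def T_def)

lemma adjoint_MQ: "mat_adjoint MQ = row3 R (1\<^sub>m a) Q"
  by (simp add: MQ_col3 mat_adjoint_col3)

lemma adjoint_MP: "mat_adjoint MP = row3 (- mat_adjoint P) (mat_adjoint T) (1\<^sub>m b)"
  by (simp add: MP_col3 mat_adjoint_col3)

lemma adjoint_E: "mat_adjoint E = row3 (1\<^sub>m m) (0\<^sub>m m a) P"
  by (simp add: E_def mat_adjoint_col3)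

lemma adjoint_T: "mat_adjoint T = mat_adjoint P * mat_adjoint R - mat_adjoint Q"
  by (simp add: T_def mat_adjoint_mult)

lemma Ac_col3:
  "Ac = col3 (row3 S (- (S * mat_adjoint R)) (0\<^sub>m m b)) (0\<^sub>m a (m + a + b))
    (row3 (- mat_adjoint P) (mat_adjoint T) (1\<^sub>m b))"
  by (simp add: Ac_def A_PQRS_def block3_eq_col3_row3 T_def)

lemma Bc_col3: "Bc = col3 (mat_adjoint E) (mat_adjoint MQ) (0\<^sub>m b (m + a + b))"
  by (simp add: Bc_def B_PQRS_def block3_eq_col3_row3 adjoint_E adjoint_MQ)

lemma dim_Ac_Bc[simp]:
  "dim_row Ac = m + a + b" "dim_col Ac = m + a + b" "dim_row Bc = m + a + b" "dim_col Bc = m + a + b"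
  by (simp_all add: Ac_col3 Bc_col3)

lemma gram_MQ: "mat_adjoint MQ * MQ = GQ"
  unfolding adjoint_MQ unfolding MQ_col3 GQ_def by (subst row3_mult_col3) auto

lemma gram_MP: "mat_adjoint MP * MP = GP"
  unfolding adjoint_MP unfolding MP_col3 GP_def by (subst row3_mult_col3) auto

lemma adjoint_MQ_MP: "mat_adjoint MQ * MP = 0\<^sub>m a b"
  unfolding adjoint_MQ unfolding MP_col3 by (subst row3_mult_col3) (auto simp: T_def)

lemma adjoint_E_MQ: "mat_adjoint E * MQ = mat_adjoint V"
  unfolding adjoint_E unfolding MQ_col3 V_def by (subst row3_mult_col3) (auto simp: mat_adjoint_mult)

lemma adjoint_E_MP: "mat_adjoint E * MP = 0\<^sub>m m b"
  unfolding adjoint_E unfolding MP_col3 by (subst row3_mult_col3) auto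

lemma adjoint_embed2_MQ: "mat_adjoint e2 * MQ = 1\<^sub>m a"
  unfolding mat_adjoint_embed unfolding MQ_col3 by (subst row3_mult_col3) auto

lemma adjoint_embed3_MP: "mat_adjoint e3 * MP = 1\<^sub>m b"
  unfolding mat_adjoint_embed unfolding MP_col3 by (subst row3_mult_col3) auto

lemma adjoint_embed_E: "mat_adjoint e1 * E = 1\<^sub>m m" "mat_adjoint e2 * E = 0\<^sub>m a m"
  unfolding mat_adjoint_embed unfolding E_def by (subst row3_mult_col3; auto)+

lemma adjoint_embed1_MQ: "mat_adjoint e1 * MQ = mat_adjoint R"
  unfolding mat_adjoint_embed unfolding MQ_col3 by (subst row3_mult_col3) auto

lemma Ac_MQ: "Ac * MQ = 0\<^sub>m (m + a + b) a"
proof -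
  have "row3 S (- (S * mat_adjoint R)) (0\<^sub>m m b) * MQ
      = S * mat_adjoint R + - (S * mat_adjoint R) * 1\<^sub>m a + 0\<^sub>m m b * mat_adjoint Q"
    unfolding MQ_col3 by (rule row3_mult_col3) auto
  also have "\<dots> = 0\<^sub>m m a" by (rule eq_matI) auto
  finally have top: "row3 S (- (S * mat_adjoint R)) (0\<^sub>m m b) * MQ = 0\<^sub>m m a" .
  have "row3 (- mat_adjoint P) (mat_adjoint T) (1\<^sub>m b) * MQ
      = - mat_adjoint P * mat_adjoint R + mat_adjoint T * 1\<^sub>m a + 1\<^sub>m b * mat_adjoint Q"
    unfolding MQ_col3 by (rule row3_mult_col3) auto
  also have "\<dots> = 0\<^sub>m b a" unfolding adjoint_T by (rule eq_matI) auto
  finally have bottom: "row3 (- mat_adjoint P) (mat_adjoint T) (1\<^sub>m b) * MQ = 0\<^sub>m b a" .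
  show ?thesis unfolding Ac_col3 by (simp add: mult_col3 top bottom)
qed

lemma Ac_E: "Ac * E = e1 * S"
proof -
  have "row3 S (- (S * mat_adjoint R)) (0\<^sub>m m b) * E
      = S * 1\<^sub>m m + - (S * mat_adjoint R) * 0\<^sub>m a m + 0\<^sub>m m b * mat_adjoint P"
    unfolding E_def by (rule row3_mult_col3) auto
  also have "\<dots> = S" by (rule eq_matI) auto
  finally have top: "row3 S (- (S * mat_adjoint R)) (0\<^sub>m m b) * E = S" .
  have "row3 (- mat_adjoint P) (mat_adjoint T) (1\<^sub>m b) * E
      = - mat_adjoint P * 1\<^sub>m m + mat_adjoint T * 0\<^sub>m a m + 1\<^sub>m b * mat_adjoint P"
    unfolding E_def by (rule row3_mult_col3) auto
  also have "\<dots> = 0\<^sub>m b m" by (rule eq_matI) auto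
  finally have bottom: "row3 (- mat_adjoint P) (mat_adjoint T) (1\<^sub>m b) * E = 0\<^sub>m b m" .
  show ?thesis unfolding Ac_col3 embed1_def by (simp add: mult_col3 top bottom)
qed

lemma Ac_MP: "Ac * MP = e3 * GP - e1 * (S * U)"
proof -
  have "row3 S (- (S * mat_adjoint R)) (0\<^sub>m m b) * MP
      = S * - P + - (S * mat_adjoint R) * T + 0\<^sub>m m b * 1\<^sub>m b"
    unfolding MP_col3 by (rule row3_mult_col3) auto
  also have "\<dots> = - (S * U)"
    unfolding U_def by (simp add: mult_add_distrib_mat' assoc_mult_mat') (rule eq_matI; simp)
  finally have top: "row3 S (- (S * mat_adjoint R)) (0\<^sub>m m b) * MP = - (S * U)" .
  have bottom: "row3 (- mat_adjoint P) (mat_adjoint T) (1\<^sub>m b) * MP = GP"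
    using gram_MP by (simp add: adjoint_MP)
  have "Ac * MP = col3 (- (S * U)) (0\<^sub>m a b) GP"
    unfolding Ac_col3 by (simp add: mult_col3 top bottom)
  also have "\<dots> = e1 * - (S * U) + e2 * 0\<^sub>m a b + e3 * GP"
    by (rule col3_eq_embed_sum) auto
  also have "\<dots> = e3 * GP - e1 * (S * U)" by (rule eq_matI) auto
  finally show ?thesis .
qed

lemma Bc_embed: "Bc = e1 * mat_adjoint E + e2 * mat_adjoint MQ"
proof -
  have "Bc = e1 * mat_adjoint E + e2 * mat_adjoint MQ + e3 * 0\<^sub>m b (m + a + b)"
    unfolding Bc_col3 by (rule col3_eq_embed_sum) auto
  then show ?thesis by simp
qed

lemma E_embed: "E = e1 + e3 * mat_adjoint P"
proof -
  have "E = e1 * 1\<^sub>m m + e2 * 0\<^sub>m a m + e3 * mat_adjoint P"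
    unfolding E_def by (rule col3_eq_embed_sum) auto
  then show ?thesis by simp
qed

lemma MQ_embed: "MQ = e1 * mat_adjoint R + e2 + e3 * mat_adjoint Q"
proof -
  have "MQ = e1 * mat_adjoint R + e2 * 1\<^sub>m a + e3 * mat_adjoint Q"
    unfolding MQ_col3 by (rule col3_eq_embed_sum) auto
  then show ?thesis by simp
qed

lemma embed3_GP: "e3 * GP = MP + E * U - MQ * T"
proof -
  have "MP + E * U - MQ * T
      = col3 (- P + U - mat_adjoint R * T) (T + 0\<^sub>m a b - T) (1\<^sub>m b + mat_adjoint P * U - mat_adjoint Q * T)"
    unfolding MP_col3 E_def MQ_col3 by (simp add: mult_col3 add_col3 minus_col3)
  also have "- P + U - mat_adjoint R * T = 0\<^sub>m m b"
    unfolding U_def by (rule eq_matI) auto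
  also have "T + 0\<^sub>m a b - T = 0\<^sub>m a b" by (rule eq_matI) auto
  also have "1\<^sub>m b + mat_adjoint P * U - mat_adjoint Q * T = GP"
    unfolding U_def GP_def adjoint_T
    by (simp add: mult_add_distrib_mat' minus_mult_distrib_mat' assoc_mult_mat') (rule eq_matI; simp)
  also have "col3 (0\<^sub>m m b) (0\<^sub>m a b) GP = e3 * GP"
    unfolding embed3_def by (simp add: mult_col3)
  finally show ?thesis by simp
qed

lemma carrier_coupling[simp]:
  "MQ \<in> carrier_mat (m + a + b) a" "MP \<in> carrier_mat (m + a + b) b"
  "mat_adjoint e2 \<in> carrier_mat a (m + a + b)" "mat_adjoint e3 \<in> carrier_mat b (m + a + b)"
  "GQ \<in> carrier_mat a a" "GP \<in> carrier_mat b b"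
  by auto

lemma WQ_inverse: "WQ \<in> carrier_mat a a" "GQ * WQ = 1\<^sub>m a" "WQ * GQ = 1\<^sub>m a"
  using minv_gram[OF carrier_coupling(1,3) adjoint_embed2_MQ] by (auto simp: WQ_def gram_MQ)

lemma WP_inverse: "WP \<in> carrier_mat b b" "GP * WP = 1\<^sub>m b" "WP * GP = 1\<^sub>m b"
  using minv_gram[OF carrier_coupling(2,4) adjoint_embed3_MP] by (auto simp: WP_def gram_MP)

lemma dim_WQ_WP[simp]: "dim_row WQ = a" "dim_col WQ = a" "dim_row WP = b" "dim_col WP = b"
  using WQ_inverse(1) WP_inverse(1) by auto

lemma adjoint_WQ: "mat_adjoint WQ = WQ"
proof -
  have "mat_adjoint GQ = GQ"
    unfolding gram_MQ[symmetric] by (simp add: mat_adjoint_mult)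
  then show ?thesis
    unfolding WQ_def using mat_adjoint_minv[of GQ a] WQ_inverse by (auto simp: WQ_def)
qed

lemma X_eq: "X = E - MQ * WQ * V"
  by (simp add: X_def X_mat_def E_def MQ_def WQ_def GQ_def V_def)

lemma dim_X[simp]: "dim_row X = m + a + b" "dim_col X = m"
  by (auto simp: X_eq)

lemma adjoint_X: "mat_adjoint X = mat_adjoint E - mat_adjoint V * (WQ * mat_adjoint MQ)"
  by (simp add: X_eq mat_adjoint_mult adjoint_WQ assoc_mult_mat')

lemma adjoint_MQ_X: "mat_adjoint MQ * X = 0\<^sub>m a m"
proof -
  have "mat_adjoint MQ * E = V"
    using arg_cong[OF adjoint_E_MQ, of mat_adjoint] by (simp add: mat_adjoint_mult)
  then have "mat_adjoint MQ * X = V - GQ * WQ * V"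
    unfolding X_eq by (simp add: mult_minus_distrib_mat' assoc_mult_mat' flip: gram_MQ)
  also have "\<dots> = 0\<^sub>m a m" by (simp add: WQ_inverse)
  finally show ?thesis .
qed

lemma adjoint_X_MP: "mat_adjoint X * MP = 0\<^sub>m m b"
proof -
  have "mat_adjoint X * MP = mat_adjoint E * MP - mat_adjoint V * (WQ * (mat_adjoint MQ * MP))"
    unfolding adjoint_X by (simp add: minus_mult_distrib_mat' assoc_mult_mat')
  also have "\<dots> = 0\<^sub>m m b" by (simp add: adjoint_E_MP adjoint_MQ_MP)
  finally show ?thesis .
qed

lemma adjoint_orthogonal:
  "mat_adjoint X * MQ = 0\<^sub>m m a" "mat_adjoint MP * X = 0\<^sub>m b m" "mat_adjoint MP * MQ = 0\<^sub>m b a"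
  using arg_cong[OF adjoint_MQ_X, of mat_adjoint] arg_cong[OF adjoint_X_MP, of mat_adjoint]
    arg_cong[OF adjoint_MQ_MP, of mat_adjoint]
  by (simp_all add: mat_adjoint_mult)

lemma GX_eq: "GX = mat_adjoint E * X"
proof -
  have "GX = mat_adjoint E * X - mat_adjoint V * (WQ * (mat_adjoint MQ * X))"
    unfolding GX_def adjoint_X by (simp add: minus_mult_distrib_mat' assoc_mult_mat')
  then show ?thesis by (simp add: adjoint_MQ_X)
qed

lemma left_inverse_X: "(mat_adjoint e1 - mat_adjoint R * mat_adjoint e2) * X = 1\<^sub>m m"
proof -
  have "mat_adjoint e1 * X = 1\<^sub>m m - mat_adjoint R * (WQ * V)"
    unfolding X_eq
    by (simp add: mult_minus_distrib_mat' assoc_mult_mat' adjoint_embed_E adjoint_embed1_MQ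
        flip: assoc_mult_mat'[of "mat_adjoint e1" MQ])
  moreover have "mat_adjoint e2 * X = - (WQ * V)"
    unfolding X_eq
    by (simp add: mult_minus_distrib_mat' assoc_mult_mat' adjoint_embed_E adjoint_embed2_MQ
        flip: assoc_mult_mat'[of "mat_adjoint e2" MQ])
  ultimately show ?thesis
    by (simp add: minus_mult_distrib_mat' assoc_mult_mat') (rule eq_matI; simp)
qed

lemma WX_inverse: "WX \<in> carrier_mat m m" "GX * WX = 1\<^sub>m m" "WX * GX = 1\<^sub>m m"
proof -
  have "X \<in> carrier_mat (m + a + b) m"
    "mat_adjoint e1 - mat_adjoint R * mat_adjoint e2 \<in> carrier_mat m (m + a + b)"
    by auto
  from minv_gram[OF this left_inverse_X]
  show "WX \<in> carrier_mat m m" "GX * WX = 1\<^sub>m m" "WX * GX = 1\<^sub>m m"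
    by (simp_all add: WX_def GX_def)
qed

lemma dim_WX_GX[simp]: "dim_row WX = m" "dim_col WX = m" "dim_row GX = m" "dim_col GX = m"
  using WX_inverse(1) by (auto simp: GX_def)

lemma GX_WX_mult: "dim_row A = m \<Longrightarrow> GX * (WX * A) = A"
  by (simp flip: assoc_mult_mat' add: WX_inverse)

lemma Ac_X: "Ac * X = e1 * S"
proof -
  have "Ac * X = Ac * E - Ac * MQ * WQ * V"
    unfolding X_eq by (simp add: mult_minus_distrib_mat' assoc_mult_mat')
  then show ?thesis by (simp add: Ac_E Ac_MQ)
qed

lemma Bc_X: "Bc * X = e1 * GX"
  unfolding Bc_embed
  by (simp add: add_mult_distrib_mat' assoc_mult_mat' adjoint_MQ_X flip: GX_eq)

lemma Bc_MQ: "Bc * MQ = e1 * mat_adjoint V + e2 * GQ"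
  unfolding Bc_embed by (simp add: add_mult_distrib_mat' assoc_mult_mat' adjoint_E_MQ gram_MQ)

lemma Bc_MP: "Bc * MP = 0\<^sub>m (m + a + b) b"
  unfolding Bc_embed by (simp add: add_mult_distrib_mat' assoc_mult_mat' adjoint_E_MP adjoint_MQ_MP)

lemma projections_sum_identity:
  "MQ * WQ * mat_adjoint MQ + X * WX * mat_adjoint X + MP * WP * mat_adjoint MP = 1\<^sub>m (m + a + b)"
  (is "?Z = _")
proof -
  txt \<open>\<open>?Z\<close> fixes \<open>MQ\<close>, \<open>X\<close> and \<open>MP\<close>; then \<open>E\<close>, \<open>e3\<close>, \<open>e1\<close> and \<open>e2\<close> are in turn
    expressed through matrices already fixed, and the embeddings add up to the identity.\<close>
  have dim_Z[simp]: "dim_row ?Z = m + a + b" "dim_col ?Z = m + a + b" by auto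
  have fixes_mult: "?Z * (M * C) = M * C" if "?Z * M = M" "dim_row M = m + a + b" "dim_col M = dim_row C"
    for M C
    using that by (metis assoc_mult_mat' dim_Z(2))
  have Z_MQ: "?Z * MQ = MQ"
    by (simp add: add_mult_distrib_mat' assoc_mult_mat' gram_MQ adjoint_orthogonal WQ_inverse)
  have Z_X: "?Z * X = X"
    by (simp add: add_mult_distrib_mat' assoc_mult_mat' adjoint_MQ_X adjoint_orthogonal WX_inverse
        flip: GX_def)
  have Z_MP: "?Z * MP = MP"
    by (simp add: add_mult_distrib_mat' assoc_mult_mat' adjoint_MQ_MP adjoint_X_MP gram_MP WP_inverse)
  have "E = X + MQ * (WQ * V)"
    unfolding X_eq by (simp add: assoc_mult_mat')
  then have Z_E: "?Z * E = E"
    using Z_X Z_MQ fixes_mult by (simp add: mult_add_distrib_mat')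
  have "?Z * (e3 * GP) = e3 * GP"
    unfolding embed3_GP by (simp add: mult_add_distrib_mat' mult_minus_distrib_mat' Z_MP Z_E Z_MQ fixes_mult)
  then have Z_e3: "?Z * e3 = e3"
    using fixes_mult[of "e3 * GP" WP] WP_inverse by (simp add: assoc_mult_mat')
  have "e1 = E - e3 * mat_adjoint P"
    unfolding E_embed by (rule eq_matI) auto
  then have Z_e1: "?Z * e1 = e1"
    using Z_E Z_e3 fixes_mult by (simp add: mult_minus_distrib_mat')
  have "e2 = MQ - e1 * mat_adjoint R - e3 * mat_adjoint Q"
    unfolding MQ_embed by (rule eq_matI) auto
  then have Z_e2: "?Z * e2 = e2"
    using Z_MQ Z_e1 Z_e3 fixes_mult by (simp add: mult_minus_distrib_mat')
  have "?Z = ?Z * 1\<^sub>m (m + a + b)" by simp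
  also have "\<dots> = 1\<^sub>m (m + a + b)"
    unfolding embed_sum_identity[symmetric]
    by (simp add: mult_add_distrib_mat' Z_e1 Z_e2 Z_e3 fixes_mult)
  finally show ?thesis .
qed

definition "Mc c = - Ac + c \<cdot>\<^sub>m Bc"
definition "Hc c = GX - (1 / c) \<cdot>\<^sub>m S"
definition "Nc c = minv (Hc c)"
definition "Pc c = MQ * WQ * mat_adjoint MQ + X * Nc c * mat_adjoint X"
definition "Phi c = (1 / c) \<cdot>\<^sub>m (X * Nc c)"

lemma dim_Mc_Hc[simp]:
  "dim_row (Mc c) = m + a + b" "dim_col (Mc c) = m + a + b" "dim_row (Hc c) = m" "dim_col (Hc c) = m"
  by (auto simp: Mc_def Hc_def)

lemma Nc_inverse:
  assumes "Re c = 0"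
  shows "Nc c \<in> carrier_mat m m" "Hc c * Nc c = 1\<^sub>m m" "Nc c * Hc c = 1\<^sub>m m"
proof -
  have "X \<in> carrier_mat (m + a + b) m"
    "mat_adjoint e1 - mat_adjoint R * mat_adjoint e2 \<in> carrier_mat m (m + a + b)"
    by auto
  moreover have "Re (1 / c) = 0" using assms by (simp add: Re_divide)
  ultimately show "Nc c \<in> carrier_mat m m" "Hc c * Nc c = 1\<^sub>m m" "Nc c * Hc c = 1\<^sub>m m"
    using minv_gram_minus_hermitian[OF _ S_carrier S_hermitian _ _ left_inverse_X]
    by (simp_all add: Nc_def Hc_def GX_def)
qed

lemma dim_Nc[simp]: "Re c = 0 \<Longrightarrow> dim_row (Nc c) = m" "Re c = 0 \<Longrightarrow> dim_col (Nc c) = m"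
  using Nc_inverse(1) by auto

lemma dim_Phi[simp]: "Re c = 0 \<Longrightarrow> dim_row (Phi c) = m + a + b" "Re c = 0 \<Longrightarrow> dim_col (Phi c) = m"
  by (auto simp: Phi_def)

context
  fixes c :: complex
  assumes c: "c \<noteq> 0" "Re c = 0"
begin

lemma Mc_MQ: "Mc c * MQ = c \<cdot>\<^sub>m (e1 * mat_adjoint V + e2 * GQ)"
proof -
  have "Mc c * MQ = - (Ac * MQ) + c \<cdot>\<^sub>m (Bc * MQ)"
    unfolding Mc_def by (simp add: add_mult_distrib_mat' mult_smult_assoc_mat')
  then show ?thesis by (simp add: Ac_MQ Bc_MQ)
qed

lemma Mc_X: "Mc c * X = c \<cdot>\<^sub>m (e1 * Hc c)"
proof -
  have "Mc c * X = c \<cdot>\<^sub>m (e1 * GX) - (c * (1 / c)) \<cdot>\<^sub>m (e1 * S)"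
    unfolding Mc_def using c by (simp add: add_mult_distrib_mat' mult_smult_assoc_mat' Ac_X Bc_X)
      (rule eq_matI; simp)
  also have "\<dots> = c \<cdot>\<^sub>m (e1 * Hc c)"
    unfolding Hc_def using c
    by (simp add: mult_minus_distrib_mat' mult_smult_distrib') (rule eq_matI; simp add: right_diff_distrib)
  finally show ?thesis .
qed

lemma Mc_MP: "Mc c * MP = e1 * (S * U) - e3 * GP"
proof -
  have "Mc c * MP = - (Ac * MP) + c \<cdot>\<^sub>m (Bc * MP)"
    unfolding Mc_def by (simp add: add_mult_distrib_mat' mult_smult_assoc_mat')
  then show ?thesis by (simp add: Ac_MP Bc_MP) (rule eq_matI; simp)
qed

lemma Mc_Pc: "Mc c * Pc c = c \<cdot>\<^sub>m Bc"
proof -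
  have "Mc c * Pc c = Mc c * MQ * (WQ * mat_adjoint MQ) + Mc c * X * (Nc c * mat_adjoint X)"
    unfolding Pc_def using c by (simp add: mult_add_distrib_mat' assoc_mult_mat')
  also have "\<dots> = c \<cdot>\<^sub>m (e1 * (mat_adjoint V * (WQ * mat_adjoint MQ)) + e2 * ((GQ * WQ) * mat_adjoint MQ))
      + c \<cdot>\<^sub>m (e1 * ((Hc c * Nc c) * mat_adjoint X))"
    using c by (simp add: Mc_MQ Mc_X mult_smult_assoc_mat' add_mult_distrib_mat' assoc_mult_mat')
  also have "\<dots> = c \<cdot>\<^sub>m (e1 * (mat_adjoint V * (WQ * mat_adjoint MQ)) + e2 * mat_adjoint MQ)
      + c \<cdot>\<^sub>m (e1 * mat_adjoint E - e1 * (mat_adjoint V * (WQ * mat_adjoint MQ)))"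
    using c by (simp add: WQ_inverse Nc_inverse adjoint_X mult_minus_distrib_mat')
  also have "\<dots> = c \<cdot>\<^sub>m (e1 * mat_adjoint E + e2 * mat_adjoint MQ)"
    by (rule eq_matI) (simp_all add: algebra_simps)
  finally show ?thesis by (simp add: Bc_embed)
qed

lemma Mc_reflection: "Mc c * (2 \<cdot>\<^sub>m Pc c - 1\<^sub>m (m + a + b)) = Ac + c \<cdot>\<^sub>m Bc"
proof -
  have "Mc c * (2 \<cdot>\<^sub>m Pc c - 1\<^sub>m (m + a + b)) = 2 \<cdot>\<^sub>m (Mc c * Pc c) - Mc c"
    using c by (simp add: Pc_def mult_minus_distrib_mat' mult_smult_distrib')
  then show ?thesis
    unfolding Mc_Pc by (simp add: Mc_def) (rule eq_matI; simp add: algebra_simps)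
qed

lemma Mc_Phi: "Mc c * Phi c = e1"
proof -
  have "Mc c * Phi c = (1 / c * c) \<cdot>\<^sub>m (e1 * (Hc c * Nc c))"
    unfolding Phi_def using c
    by (simp add: mult_smult_distrib' assoc_mult_mat'[symmetric, of "Mc c"] Mc_X mult_smult_assoc_mat'
        smult_smult_mat assoc_mult_mat')
  then show ?thesis using c by (simp add: Nc_inverse)
qed

lemma Mc_Phi_mult: "dim_row C = m \<Longrightarrow> Mc c * (Phi c * C) = e1 * C"
  using c by (simp add: Mc_Phi flip: assoc_mult_mat'[of "Mc c" "Phi c" C])

lemma Mc_preimage_embed2: "Mc c * ((1 / c) \<cdot>\<^sub>m (MQ * WQ) - Phi c * (mat_adjoint V * WQ)) = e2"
proof -
  have "Mc c * ((1 / c) \<cdot>\<^sub>m (MQ * WQ)) = (1 / c) \<cdot>\<^sub>m (Mc c * MQ * WQ)"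
    by (simp add: mult_smult_distrib' assoc_mult_mat')
  also have "\<dots> = (e1 * mat_adjoint V + e2 * GQ) * WQ"
    using c by (simp add: Mc_MQ mult_smult_assoc_mat' smult_smult_mat)
  also have "\<dots> = e1 * (mat_adjoint V * WQ) + e2"
    by (simp add: add_mult_distrib_mat' assoc_mult_mat' WQ_inverse)
  finally have "Mc c * ((1 / c) \<cdot>\<^sub>m (MQ * WQ)) = e1 * (mat_adjoint V * WQ) + e2" .
  then show ?thesis
    using c by (simp add: mult_minus_distrib_mat' Mc_Phi_mult) (rule eq_matI; simp)
qed

lemma Mc_preimage_embed3: "Mc c * ((Phi c * (S * U) - MP) * WP) = e3"
proof -
  have "Mc c * (Phi c * (S * U) - MP) = e3 * GP"
    using c by (simp add: mult_minus_distrib_mat' Mc_Phi_mult Mc_MP) (rule eq_matI; simp)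
  then have "Mc c * ((Phi c * (S * U) - MP) * WP) = (e3 * GP) * WP"
    using c by (simp flip: assoc_mult_mat'[of "Mc c"])
  then show ?thesis by (simp add: assoc_mult_mat' WP_inverse)
qed

lemma Mc_right_inverse: "\<exists>M'. M' \<in> carrier_mat (m + a + b) (m + a + b) \<and> Mc c * M' = 1\<^sub>m (m + a + b)"
proof -
  define M' where "M' = Phi c * mat_adjoint e1
    + ((1 / c) \<cdot>\<^sub>m (MQ * WQ) - Phi c * (mat_adjoint V * WQ)) * mat_adjoint e2
    + ((Phi c * (S * U) - MP) * WP) * mat_adjoint e3"
  have "Mc c * M' = e1 * mat_adjoint e1 + e2 * mat_adjoint e2 + e3 * mat_adjoint e3"
    unfolding M'_def using c
    by (simp add: mult_add_distrib_mat' assoc_mult_mat'[symmetric, of "Mc c"] Mc_Phi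
        Mc_preimage_embed2 Mc_preimage_embed3)
  then have "Mc c * M' = 1\<^sub>m (m + a + b)" by (simp add: embed_sum_identity)
  moreover have "M' \<in> carrier_mat (m + a + b) (m + a + b)" using c by (auto simp: M'_def)
  ultimately show ?thesis by blast
qed

lemma Mc_inverse:
  "minv (Mc c) \<in> carrier_mat (m + a + b) (m + a + b)" "minv (Mc c) * Mc c = 1\<^sub>m (m + a + b)"
proof -
  have Mc: "Mc c \<in> carrier_mat (m + a + b) (m + a + b)" by auto
  obtain M' where "M' \<in> carrier_mat (m + a + b) (m + a + b)" "Mc c * M' = 1\<^sub>m (m + a + b)"
    using Mc_right_inverse by blast
  from minv_inverse[OF Mc this]
  show "minv (Mc c) \<in> carrier_mat (m + a + b) (m + a + b)" "minv (Mc c) * Mc c = 1\<^sub>m (m + a + b)"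
    by auto
qed

lemma scattering_formula: "minv (Mc c) * (Ac + c \<cdot>\<^sub>m Bc) = 2 \<cdot>\<^sub>m Pc c - 1\<^sub>m (m + a + b)"
proof -
  have "minv (Mc c) * (Ac + c \<cdot>\<^sub>m Bc) = (minv (Mc c) * Mc c) * (2 \<cdot>\<^sub>m Pc c - 1\<^sub>m (m + a + b))"
    unfolding Mc_reflection[symmetric] using Mc_inverse(1) c by (simp add: Pc_def assoc_mult_mat')
  then show ?thesis using Mc_inverse(2) c by (simp add: Pc_def)
qed

end

lemma scat_eq_reflection:
  assumes "k \<noteq> 0"
  shows "scat m a b P Q R S k = 2 \<cdot>\<^sub>m Pc (\<i> * complex_of_real k) - 1\<^sub>m (m + a + b)"
proof -
  define c where "c = \<i> * complex_of_real k"
  have c: "c \<noteq> 0" "Re c = 0" using assms by (auto simp: c_def)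
  have dim: "dim_row (minv (Mc c)) = m + a + b" "dim_col (minv (Mc c)) = m + a + b"
    using Mc_inverse(1)[OF c] by auto
  have "- Ac - c \<cdot>\<^sub>m Bc = - (Ac + c \<cdot>\<^sub>m Bc)" by (rule eq_matI) auto
  then have "scat m a b P Q R S k = minv (Mc c) * (Ac + c \<cdot>\<^sub>m Bc)"
    unfolding scat_def Let_def Ac_def[symmetric] Bc_def[symmetric] c_def[symmetric] Mc_def[symmetric]
    using dim by simp
  then show ?thesis using scattering_formula[OF c] by (simp add: c_def)
qed


definition "Kc c = (1 / c) \<cdot>\<^sub>m (WX * S)"

lemma Kc_carrier: "Kc c \<in> carrier_mat m m"
  by (auto simp: Kc_def)

lemma l1_norm_Kc: "l1_norm_mat (Kc c) = l1_norm_mat (WX * S) / cmod c"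
  by (simp add: Kc_def l1_norm_mat_smult norm_divide)

lemma resolvent_identity:
  assumes "c \<noteq> 0" "Re c = 0"
  shows "Nc c * GX - 1\<^sub>m m = Nc c * GX * Kc c"
proof -
  have "Nc c * GX - 1\<^sub>m m = Nc c * GX - Nc c * Hc c"
    using assms by (simp add: Nc_inverse)
  also have "\<dots> = (1 / c) \<cdot>\<^sub>m (Nc c * S)"
    unfolding Hc_def using assms
    by (simp add: mult_minus_distrib_mat' mult_smult_distrib') (rule eq_matI; simp)
  also have "Nc c * S = Nc c * GX * (WX * S)"
    using assms by (simp add: assoc_mult_mat' GX_WX_mult)
  finally show ?thesis
    using assms by (simp add: Kc_def mult_smult_distrib')
qed

definition "scat_const = - 1\<^sub>m (m + a + b) + 2 \<cdot>\<^sub>m (MQ * WQ * mat_adjoint MQ) + 2 \<cdot>\<^sub>m (X * WX * mat_adjoint X)"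
definition "scat_lim = 1\<^sub>m (m + a + b) - 2 \<cdot>\<^sub>m (MP * WP * mat_adjoint MP)"

lemma dim_scat_const_lim[simp]:
  "dim_row scat_const = m + a + b" "dim_col scat_const = m + a + b"
  "dim_row scat_lim = m + a + b" "dim_col scat_lim = m + a + b"
  by (auto simp: scat_const_def scat_lim_def)

lemma scat_const_eq_scat_lim: "scat_const = scat_lim"
proof (rule eq_matI)
  fix i j assume "i < dim_row scat_lim" "j < dim_col scat_lim"
  then have ij: "i < m + a + b" "j < m + a + b" by auto
  define d where "d = (1\<^sub>m (m + a + b) :: complex mat) $$ (i, j)"
  define q where "q = (MQ * WQ * mat_adjoint MQ) $$ (i, j)"
  define x where "x = (X * WX * mat_adjoint X) $$ (i, j)"
  define p where "p = (MP * WP * mat_adjoint MP) $$ (i, j)"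
  have sum: "d = q + x + p"
    using arg_cong[OF projections_sum_identity, of "\<lambda>M. M $$ (i, j)"] ij
    unfolding d_def q_def x_def p_def by (simp del: index_mult_mat(1) index_one_mat(1))
  have const: "scat_const $$ (i, j) = - d + 2 * q + 2 * x"
    using ij unfolding scat_const_def d_def q_def x_def by (simp del: index_mult_mat(1) index_one_mat(1))
  have lim: "scat_lim $$ (i, j) = d - 2 * p"
    using ij unfolding scat_lim_def d_def p_def by (simp del: index_mult_mat(1) index_one_mat(1))
  show "scat_const $$ (i, j) = scat_lim $$ (i, j)"
    unfolding const lim sum by (simp add: algebra_simps)
qed simp_all

lemma scat_minus_const:
  assumes "k \<noteq> 0"
  defines "c \<equiv> \<i> * complex_of_real k"
  shows "scat m a b P Q R S k - scat_const = 2 \<cdot>\<^sub>m (X * (Nc c * GX - 1\<^sub>m m) * (WX * mat_adjoint X))"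
proof -
  have c: "Re c = 0" by (simp add: c_def)
  have "X * (Nc c * GX - 1\<^sub>m m) * (WX * mat_adjoint X) = X * Nc c * mat_adjoint X - X * WX * mat_adjoint X"
    using c by (simp add: mult_minus_distrib_mat' minus_mult_distrib_mat' assoc_mult_mat' GX_WX_mult)
  then show ?thesis
    unfolding scat_eq_reflection[OF assms(1)] c_def[symmetric] Pc_def scat_const_def using c
    by (simp del: index_mult_mat(1)) (rule eq_matI; simp del: index_mult_mat(1) add: algebra_simps)
qed

lemma scattering_expansion:
  assumes k: "l1_norm_mat (WX * S) < k" and il: "i < m + a + b" "l < m + a + b"
  shows "(\<lambda>j. 2 * (X * ((1 / (\<i> * complex_of_real k)) ^ Suc j \<cdot>\<^sub>m (WX * S) ^\<^sub>m Suc j) * WX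
      * mat_adjoint X) $$ (i, l)) sums (scat m a b P Q R S k $$ (i, l) - scat_const $$ (i, l))"
proof -
  define c where "c = \<i> * complex_of_real k"
  have k_pos: "k > 0" using k l1_norm_mat_nonneg[of "WX * S"] by linarith
  then have c: "c \<noteq> 0" "Re c = 0" "cmod c = k" by (auto simp: c_def norm_mult)
  have NGX: "Nc c * GX \<in> carrier_mat m m" and X: "X \<in> carrier_mat (m + a + b) m"
    and WXX: "WX * mat_adjoint X \<in> carrier_mat m (m + a + b)" and WXS: "WX * S \<in> carrier_mat m m"
    using c by auto
  have "l1_norm_mat (Kc c) < 1" using k c k_pos by (simp add: l1_norm_Kc)
  from neumann_sums[OF Kc_carrier NGX resolvent_identity[OF c(1,2)] this X WXX il]
  have "(\<lambda>j. 2 * (X * Kc c ^\<^sub>m Suc j * (WX * mat_adjoint X)) $$ (i, l))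
      sums (2 * (X * (Nc c * GX - 1\<^sub>m m) * (WX * mat_adjoint X)) $$ (i, l))"
    by (rule sums_mult)
  moreover have "X * ((1 / c) ^ Suc j \<cdot>\<^sub>m (WX * S) ^\<^sub>m Suc j) * WX * mat_adjoint X
      = X * Kc c ^\<^sub>m Suc j * (WX * mat_adjoint X)" for j
    unfolding Kc_def smult_pow_mat[OF WXS] by (rule assoc_mult_mat') auto
  moreover have "scat m a b P Q R S k $$ (i, l) - scat_const $$ (i, l)
      = 2 * (X * (Nc c * GX - 1\<^sub>m m) * (WX * mat_adjoint X)) $$ (i, l)"
    using il k_pos arg_cong[OF scat_minus_const, of k "\<lambda>M. M $$ (i, l)"]
    by (simp del: index_mult_mat(1) add: c_def)
  ultimately show ?thesis by (simp add: c_def)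
qed

lemma scat_minus_lim_bound:
  assumes k: "k > 2 * l1_norm_mat (WX * S) + 1" and il: "i < m + a + b" "l < m + a + b"
  shows "norm (scat m a b P Q R S k $$ (i, l) - scat_lim $$ (i, l))
    \<le> 4 * m * l1_norm_mat X * l1_norm_mat (WX * S) * l1_norm_mat (WX * mat_adjoint X) / k"
proof -
  define c where "c = \<i> * complex_of_real k"
  define g where "g = l1_norm_mat (WX * S)"
  have g: "g \<ge> 0" unfolding g_def by (rule l1_norm_mat_nonneg)
  have k_pos: "k > 0" using k g by (simp add: g_def)
  then have c: "c \<noteq> 0" "Re c = 0" "cmod c = k" by (auto simp: c_def norm_mult)
  have NGX: "Nc c * GX \<in> carrier_mat m m" and X: "X \<in> carrier_mat (m + a + b) m"
    and WXX: "WX * mat_adjoint X \<in> carrier_mat m (m + a + b)"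
    using c by auto
  have K: "l1_norm_mat (Kc c) = g / k" using c by (simp add: l1_norm_Kc g_def)
  have "l1_norm_mat (Kc c) \<le> 1 / 2" unfolding K using k k_pos by (simp add: g_def field_simps)
  from l1_norm_mat_le_if_neumann[OF Kc_carrier NGX resolvent_identity[OF c(1,2)] this]
  have "l1_norm_mat (Nc c * GX) * l1_norm_mat (Kc c) \<le> 2 * m * (g / k)"
    unfolding K using g k_pos by (intro mult_right_mono) auto
  then have "l1_norm_mat (Nc c * GX * Kc c) \<le> 2 * m * (g / k)"
    using l1_norm_mat_mult_le[of "Nc c * GX" "Kc c"] NGX Kc_carrier[of c] by auto
  then have remainder: "norm ((X * (Nc c * GX * Kc c) * (WX * mat_adjoint X)) $$ (i, l))
      \<le> l1_norm_mat X * (2 * m * (g / k)) * l1_norm_mat (WX * mat_adjoint X)"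
    using X WXX NGX Kc_carrier[of c] il
    by (intro order_trans[OF norm_index_mult3_le] mult_right_mono mult_left_mono l1_norm_mat_nonneg)
      auto
  have "scat m a b P Q R S k $$ (i, l) - scat_lim $$ (i, l)
      = 2 * (X * (Nc c * GX * Kc c) * (WX * mat_adjoint X)) $$ (i, l)"
    using il k_pos arg_cong[OF scat_minus_const, of k "\<lambda>M. M $$ (i, l)"]
    by (simp del: index_mult_mat(1) add: scat_const_eq_scat_lim c_def[symmetric]
        resolvent_identity[OF c(1,2)])
  then have "norm (scat m a b P Q R S k $$ (i, l) - scat_lim $$ (i, l))
      = 2 * norm ((X * (Nc c * GX * Kc c) * (WX * mat_adjoint X)) $$ (i, l))"
    by (simp add: norm_mult)
  also have "\<dots> \<le> 2 * (l1_norm_mat X * (2 * m * (g / k)) * l1_norm_mat (WX * mat_adjoint X))"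
    using remainder by simp
  finally show ?thesis by (simp add: g_def algebra_simps)
qed

lemma scattering_limit:
  assumes "i < m + a + b" "l < m + a + b"
  shows "((\<lambda>k. scat m a b P Q R S k $$ (i, l)) \<longlongrightarrow> scat_lim $$ (i, l)) at_top"
  by (rule tendsto_at_top_if_norm_le_inverse) (rule scat_minus_lim_bound[OF _ assms])

end

theorem mainTheorem4:
  fixes m a b :: nat and P Q R S :: "complex mat"
  defines "n \<equiv> m + a + b"
  assumes "m \<ge> 1"
    and "S \<in> carrier_mat m m" and "invertible_mat S" and "mat_adjoint S = S"
    and "P \<in> carrier_mat m b" and "Q \<in> carrier_mat a b" and "R \<in> carrier_mat a m"
  shows
    "(\<exists>K>0. \<forall>k>K.
       (let X = X_mat m a b P Q R; MQ = M_Q a P Q R;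
            G = minv (mat_adjoint X * X);
            T = (\<lambda>j::nat. X * ((1 / (\<i> * complex_of_real k)) ^ (Suc j) \<cdot>\<^sub>m
                              ((G * S) ^\<^sub>m (Suc j))) * G * mat_adjoint X);
            C = - 1\<^sub>m n
                + 2 \<cdot>\<^sub>m (MQ * minv (1\<^sub>m a + R * mat_adjoint R + Q * mat_adjoint Q) * mat_adjoint MQ)
                + 2 \<cdot>\<^sub>m (X * G * mat_adjoint X)
        in \<forall>i<n. \<forall>l<n.
             (\<lambda>j. 2 * T j $$ (i, l)) sums (scat m a b P Q R S k $$ (i, l) - C $$ (i, l))))
     \<and> (\<forall>i<n. \<forall>l<n.
       ((\<lambda>k. scat m a b P Q R S k $$ (i, l)) \<longlongrightarrow>
          (1\<^sub>m n - 2 \<cdot>\<^sub>m (M_P b P Q R *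
             minv (1\<^sub>m b + mat_adjoint P * P + mat_adjoint (R * P - Q) * (R * P - Q))
             * mat_adjoint (M_P b P Q R))) $$ (i, l)) at_top)"
proof -
  interpret pqrs_coupling m a b P Q R S
    using assms by unfold_locales auto
  have "l1_norm_mat (WX * S) + 1 > 0"
    using l1_norm_mat_nonneg[of "WX * S"] by linarith
  then show ?thesis
    unfolding Let_def n_def X_def[symmetric] MQ_def[symmetric] GX_def[symmetric] WX_def[symmetric]
      GQ_def[symmetric] WQ_def[symmetric] MP_def[symmetric] T_def[symmetric] GP_def[symmetric]
      WP_def[symmetric] scat_const_def[symmetric] scat_lim_def[symmetric]
    by (intro conjI exI[of _ "l1_norm_mat (WX * S) + 1"] allI impI scattering_expansion scattering_limit)
      auto
qed

end
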